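(* For any two distinct jobs $j,k$, in the schedule produced by $1$-SORT we have $D(j,k)\le 2\,D^*(j,k)=2\min\{\sigma_j,\sigma_k\}$.
   Context: Setting: single machine, jobs $J=\{1,\dots,n\}$, each job $j$ with test time $t_j\ge0$ and processing time $p_j\ge0$ (revealed only when the test is executed); each job's test must be executed before its processing part, which may start any time after the test; operations are non-preemptive and the machine does one at a time. $\sigma_j=t_j+p_j$. Standing assumption (general position): no two of the $3n$ numbers $t_1,\dots,t_n,p_1,\dots,p_n,\sigma_1,\dots,\sigma_n$ are equal. Algorithm $1$-SORT: keep a priority queue of available operations, initially the test of every job $j$ with priority $t_j$; repeatedly remove a minimum-priority operation and execute it immediately; after executing the test of $j$, insert the processing part of $j$ with priority $p_j$. For a schedule and distinct jobs $j,k$, let $d_{k,j}$ be the total amount of time during which operations of $k$ are executed before the completion time of $j$, and $D(j,k)=d_{j,k}+d_{k,j}$, evaluated for the $1$-SORT schedule. $D^*(j,k)=\min\{\sigma_j,\sigma_k\}$. *)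

theory Defs
  imports Main Complex_Main
begin

text \<open>Jobs are indexed by 0..<n. An operation is either the test or the
processing part of a job.\<close>

datatype operation = Test nat | Proc nat

fun op_job :: "operation \<Rightarrow> nat" where
  "op_job (Test j) = j" | "op_job (Proc j) = j"

fun op_len :: "(nat \<Rightarrow> real) \<Rightarrow> (nat \<Rightarrow> real) \<Rightarrow> operation \<Rightarrow> real" where
  "op_len t p (Test j) = t j" | "op_len t p (Proc j) = p j"

fun new_ops :: "operation \<Rightarrow> operation set" where
  "new_ops (Test j) = {Proc j}" | "new_ops (Proc j) = {}"

text \<open>The natural number argument is fuel (number of remaining steps).\<close>
fun sort1_run :: "(nat \<Rightarrow> real) \<Rightarrow> (nat \<Rightarrow> real) \<Rightarrow> nat \<Rightarrow> operation set \<Rightarrow> operation list" where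
  "sort1_run t p 0 Q = []"
| "sort1_run t p (Suc m) Q =
     (if Q = {} then []
      else (let x0 = arg_min (op_len t p) (\<lambda>x. x \<in> Q)
            in x0 # sort1_run t p m ((Q - {x0}) \<union> new_ops x0)))"

text \<open>The sequence of operations executed by 1-SORT on jobs 0..<n (executed
back to back, without idle time, starting at time 0).\<close>
definition sort1_schedule :: "nat \<Rightarrow> (nat \<Rightarrow> real) \<Rightarrow> (nat \<Rightarrow> real) \<Rightarrow> operation list" where
  "sort1_schedule n t p = sort1_run t p (2 * n) (Test ` {..<n})"

text \<open>d k j: total time during which operations of k are executed before the
completion time of j (the completion of j's processing part). Since the
schedule is a non-preemptive sequence, these are exactly the operations of k
preceding the processing part of j in the sequence.\<close>
definition d_time :: "nat \<Rightarrow> (nat \<Rightarrow> real) \<Rightarrow> (nat \<Rightarrow> real) \<Rightarrow> nat \<Rightarrow> nat \<Rightarrow> real" where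
  "d_time n t p k j =
     sum_list (map (\<lambda>x. if op_job x = k then op_len t p x else 0)
       (takeWhile (\<lambda>x. x \<noteq> Proc j) (sort1_schedule n t p)))"

definition D_sort1 :: "nat \<Rightarrow> (nat \<Rightarrow> real) \<Rightarrow> (nat \<Rightarrow> real) \<Rightarrow> nat \<Rightarrow> nat \<Rightarrow> real" where
  "D_sort1 n t p j k = d_time n t p j k + d_time n t p k j"

definition general_position :: "nat \<Rightarrow> (nat \<Rightarrow> real) \<Rightarrow> (nat \<Rightarrow> real) \<Rightarrow> bool" where
  "general_position n t p \<longleftrightarrow>
     distinct (map t [0..<n] @ map p [0..<n] @ map (\<lambda>j. t j + p j) [0..<n])"

end

theory Submission
  imports Defs
begin

text \<open>Let the test of \<open>j\<close> be executed before the test of \<open>k\<close>. When 1-SORT picks an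
operation, every operation that is available but not yet executed is at least as long.
Hence \<open>t j \<le> t k\<close>, and depending on where \<open>Proc j\<close> falls relative to the two operations
of \<open>k\<close>, \<open>D(j,k)\<close> is \<open>t j + p j\<close>, \<open>t j + p j + t k\<close> or \<open>t j + t k + p k\<close>; in each case the
extra summand is dominated by an operation of the other job that was available when the
smaller one was chosen, which gives the factor 2.\<close>

lemma sort1_run_Suc:
  "Q \<noteq> {} \<Longrightarrow> x = arg_min (op_len t p) (\<lambda>x. x \<in> Q) \<Longrightarrow>
   sort1_run t p (Suc m) Q = x # sort1_run t p m ((Q - {x}) \<union> new_ops x)"
  by (simp add: Let_def)

lemma arg_min_op_len_in:
  "finite Q \<Longrightarrow> Q \<noteq> {} \<Longrightarrow> arg_min (op_len t p) (\<lambda>x. x \<in> Q) \<in> Q"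
  using arg_min_if_finite(1)[of Q "op_len t p"] by (simp add: arg_min_on_def)

lemma arg_min_op_len_le:
  "finite Q \<Longrightarrow> y \<in> Q \<Longrightarrow> op_len t p (arg_min (op_len t p) (\<lambda>x. x \<in> Q)) \<le> op_len t p y"
  using arg_min_least[of Q y "op_len t p"] by (auto simp: arg_min_on_def)

lemma finite_new_ops: "finite (new_ops x)"
  by (cases x) auto

lemma op_job_eq_iff: "op_job x = k \<longleftrightarrow> x = Test k \<or> x = Proc k"
  by (cases x) auto

lemma new_ops_Proc_iff: "Proc j \<in> new_ops x \<longleftrightarrow> x = Test j"
  by (cases x) auto

lemma sort1_run_nth_le_available:
  assumes "finite Q" and "i < length (sort1_run t p m Q)"
    and "x \<notin> set (take i (sort1_run t p m Q))"
    and "x \<in> Q \<or> (\<exists>j. x = Proc j \<and> Test j \<in> set (take i (sort1_run t p m Q)))"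
  shows "op_len t p (sort1_run t p m Q ! i) \<le> op_len t p x"
  using assms
proof (induction m arbitrary: Q i)
  case 0
  then show ?case by simp
next
  case (Suc m)
  have "Q \<noteq> {}" using Suc.prems(2) by (auto split: if_splits)
  define x0 where "x0 = arg_min (op_len t p) (\<lambda>x. x \<in> Q)"
  define Q' where "Q' = (Q - {x0}) \<union> new_ops x0"
  have run: "sort1_run t p (Suc m) Q = x0 # sort1_run t p m Q'"
    using sort1_run_Suc[OF \<open>Q \<noteq> {}\<close> x0_def] by (simp add: Q'_def)
  have "finite Q'" using Suc.prems(1) finite_new_ops by (simp add: Q'_def)
  show ?case
  proof (cases i)
    case 0
    then have "x \<in> Q" using Suc.prems(4) by auto
    then show ?thesis using arg_min_op_len_le[OF Suc.prems(1)] 0 run x0_def by simp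
  next
    case (Suc i')
    have "x \<noteq> x0" using Suc.prems(3) run Suc by auto
    then have "x \<in> Q' \<or> (\<exists>j. x = Proc j \<and> Test j \<in> set (take i' (sort1_run t p m Q')))"
      using Suc.prems(4) run Suc by (auto simp: Q'_def)
    then show ?thesis using Suc.IH[OF \<open>finite Q'\<close>] Suc.prems(2,3) run Suc by simp
  qed
qed

lemma sort1_run_Test_before_Proc:
  assumes "finite Q" and "i < length (sort1_run t p m Q)"
    and "sort1_run t p m Q ! i = Proc j" and "Proc j \<notin> Q"
  shows "Test j \<in> set (take i (sort1_run t p m Q))"
  using assms
proof (induction m arbitrary: Q i)
  case 0
  then show ?case by simp
next
  case (Suc m)
  have "Q \<noteq> {}" using Suc.prems(2) by (auto split: if_splits)
  define x0 where "x0 = arg_min (op_len t p) (\<lambda>x. x \<in> Q)"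
  define Q' where "Q' = (Q - {x0}) \<union> new_ops x0"
  have run: "sort1_run t p (Suc m) Q = x0 # sort1_run t p m Q'"
    using sort1_run_Suc[OF \<open>Q \<noteq> {}\<close> x0_def] by (simp add: Q'_def)
  have "finite Q'" using Suc.prems(1) finite_new_ops by (simp add: Q'_def)
  have "x0 \<in> Q" using arg_min_op_len_in[OF Suc.prems(1) \<open>Q \<noteq> {}\<close>] x0_def by simp
  show ?case
  proof (cases i)
    case 0
    then show ?thesis using Suc.prems \<open>x0 \<in> Q\<close> run by simp
  next
    case (Suc i')
    show ?thesis
    proof (cases "Proc j \<in> Q'")
      case True
      then have "x0 = Test j" using Suc.prems(4) new_ops_Proc_iff by (auto simp: Q'_def)
      then show ?thesis using run Suc by simp
    next
      case False
      then show ?thesis using Suc.IH[OF \<open>finite Q'\<close>, of i'] Suc.prems run \<open>i = Suc i'\<close> by simp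
    qed
  qed
qed

definition valid_queue :: "operation set \<Rightarrow> bool" where
  "valid_queue Q \<longleftrightarrow> finite Q \<and> (\<forall>j. Proc j \<in> Q \<longrightarrow> Test j \<notin> Q)"

text \<open>The number of operations still to be executed from queue \<open>Q\<close>: every test in \<open>Q\<close>
later releases its processing part.\<close>

definition queue_work :: "operation set \<Rightarrow> nat" where
  "queue_work Q = card Q + card (Test -` Q)"

lemma queue_step_Test:
  assumes "valid_queue Q" and "Test i \<in> Q"
  defines "Q' \<equiv> (Q - {Test i}) \<union> new_ops (Test i)"
  shows "valid_queue Q'" and "Suc (queue_work Q') = queue_work Q"
    and "Test -` Q' = Test -` Q - {i}" and "Q' = insert (Proc i) (Q - {Test i})"
proof -
  have "finite Q" and "Proc i \<notin> Q" using assms(1,2) by (auto simp: valid_queue_def)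
  then have "card Q > 0" using assms(2) by (auto simp: card_gt_0_iff)
  show Q': "Q' = insert (Proc i) (Q - {Test i})" by (auto simp: Q'_def)
  show T: "Test -` Q' = Test -` Q - {i}" using Q' by auto
  show "valid_queue Q'" using assms(1) Q' by (auto simp: valid_queue_def)
  have "finite (Test -` Q)" using \<open>finite Q\<close> by (rule finite_vimageI) (auto simp: inj_def)
  then have "card (Test -` Q) > 0" using assms(2) card_gt_0_iff by blast
  moreover have "card Q' = card Q" using Q' \<open>finite Q\<close> \<open>Proc i \<notin> Q\<close> assms(2) \<open>card Q > 0\<close> by simp
  ultimately show "Suc (queue_work Q') = queue_work Q"
    using T assms(2) by (simp add: queue_work_def card_Diff_singleton)
qed

lemma queue_step_Proc:
  assumes "valid_queue Q" and "Proc i \<in> Q"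
  defines "Q' \<equiv> (Q - {Proc i}) \<union> new_ops (Proc i)"
  shows "valid_queue Q'" and "Suc (queue_work Q') = queue_work Q"
    and "Test -` Q' = Test -` Q" and "Q' = Q - {Proc i}"
proof -
  have "finite Q" using assms(1) by (simp add: valid_queue_def)
  then have "card Q > 0" using assms(2) by (auto simp: card_gt_0_iff)
  show Q': "Q' = Q - {Proc i}" by (simp add: Q'_def)
  show T: "Test -` Q' = Test -` Q" using Q' by auto
  show "valid_queue Q'" using assms(1) Q' by (auto simp: valid_queue_def)
  show "Suc (queue_work Q') = queue_work Q"
    using Q' T \<open>finite Q\<close> assms(2) \<open>card Q > 0\<close> by (simp add: queue_work_def)
qed

lemma sort1_run_permutes:
  assumes "valid_queue Q" and "queue_work Q \<le> m"
  shows "distinct (sort1_run t p m Q) \<and> set (sort1_run t p m Q) = Q \<union> Proc ` (Test -` Q)"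
  using assms
proof (induction m arbitrary: Q)
  case 0
  then show ?case by (auto simp: valid_queue_def queue_work_def)
next
  case (Suc m)
  show ?case
  proof (cases "Q = {}")
    case True
    then show ?thesis by simp
  next
    case False
    define x0 where "x0 = arg_min (op_len t p) (\<lambda>x. x \<in> Q)"
    define Q' where "Q' = (Q - {x0}) \<union> new_ops x0"
    have run: "sort1_run t p (Suc m) Q = x0 # sort1_run t p m Q'"
      using sort1_run_Suc[OF False x0_def] by (simp add: Q'_def)
    have "x0 \<in> Q"
      using arg_min_op_len_in[OF _ False] Suc.prems(1) x0_def by (simp add: valid_queue_def)
    have "valid_queue Q' \<and> queue_work Q' \<le> m \<and> x0 \<notin> Q' \<union> Proc ` (Test -` Q')
      \<and> insert x0 (Q' \<union> Proc ` (Test -` Q')) = Q \<union> Proc ` (Test -` Q)"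
    proof (cases x0)
      case (Test i)
      then show ?thesis
        using queue_step_Test[OF Suc.prems(1), of i] \<open>x0 \<in> Q\<close> Suc.prems(2) by (auto simp: Q'_def)
    next
      case (Proc i)
      moreover have "Test i \<notin> Q" using Suc.prems(1) \<open>x0 \<in> Q\<close> Proc by (auto simp: valid_queue_def)
      ultimately show ?thesis
        using queue_step_Proc[OF Suc.prems(1), of i] \<open>x0 \<in> Q\<close> Suc.prems(2) by (auto simp: Q'_def)
    qed
    then show ?thesis using Suc.IH run by auto
  qed
qed

lemma sort1_schedule_permutes:
  "distinct (sort1_schedule n t p) \<and>
   set (sort1_schedule n t p) = Test ` {..<n} \<union> Proc ` {..<n}"
proof -
  have "valid_queue (Test ` {..<n})" by (auto simp: valid_queue_def)
  moreover have "Test -` (Test ` {..<n}) = {..<n}" by auto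
  moreover have "card (Test ` {..<n}) = n" by (simp add: card_image inj_on_def)
  ultimately show ?thesis
    using sort1_run_permutes[of "Test ` {..<n}" "2 * n" t p]
    by (simp add: sort1_schedule_def queue_work_def)
qed

lemma sort1_schedule_nth_le_available:
  assumes "i < length (sort1_schedule n t p)" and "x \<notin> set (take i (sort1_schedule n t p))"
    and "x \<in> Test ` {..<n} \<or> (\<exists>j. x = Proc j \<and> Test j \<in> set (take i (sort1_schedule n t p)))"
  shows "op_len t p (sort1_schedule n t p ! i) \<le> op_len t p x"
  using assms unfolding sort1_schedule_def by (intro sort1_run_nth_le_available) auto

lemma sort1_schedule_Test_before_Proc:
  "i < length (sort1_schedule n t p) \<Longrightarrow> sort1_schedule n t p ! i = Proc j \<Longrightarrow>
   Test j \<in> set (take i (sort1_schedule n t p))"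
  unfolding sort1_schedule_def by (rule sort1_run_Test_before_Proc) auto

lemma distinct_nth_in_set_take_iff:
  assumes "distinct xs" and "q < length xs"
  shows "xs ! q \<in> set (take i xs) \<longleftrightarrow> q < i"
proof
  assume "xs ! q \<in> set (take i xs)"
  then obtain r where "r < length xs" "r < i" "xs ! r = xs ! q"
    by (auto simp: in_set_conv_nth)
  then show "q < i" using nth_eq_iff_index_eq[OF assms(1)] assms(2) by auto
next
  assume "q < i"
  then show "xs ! q \<in> set (take i xs)" using assms(2) by (auto simp: in_set_conv_nth)
qed

lemma d_time_eq_prefix:
  assumes "distinct (sort1_schedule n t p)" and "b < length (sort1_schedule n t p)"
    and "sort1_schedule n t p ! b = Proc j"
  defines "S \<equiv> set (take b (sort1_schedule n t p))"
  shows "d_time n t p k j = (if Test k \<in> S then t k else 0) + (if Proc k \<in> S then p k else 0)"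
proof -
  let ?L = "sort1_schedule n t p"
  have "takeWhile (\<lambda>x. x \<noteq> Proc j) ?L = take b ?L"
  proof (rule takeWhile_eq_take_P_nth)
    fix i assume "i < b" "i < length ?L"
    then show "?L ! i \<noteq> Proc j" using nth_eq_iff_index_eq[OF assms(1), of i b] assms(2,3) by auto
  qed (use assms(3) in auto)
  then have "d_time n t p k j = (\<Sum>x\<in>S. if op_job x = k then op_len t p x else 0)"
    unfolding d_time_def S_def using assms(1) by (simp add: sum_list_distinct_conv_sum_set)
  also have "\<dots> = sum (op_len t p) {x \<in> S. op_job x = k}"
    by (simp add: sum.inter_filter S_def)
  also have "{x \<in> S. op_job x = k} = {Test k, Proc k} \<inter> S"
    by (auto simp: op_job_eq_iff)
  finally show ?thesis by (auto simp: Int_insert_left)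
qed

lemma D_sort1_commute: "D_sort1 n t p j k = D_sort1 n t p k j"
  by (simp add: D_sort1_def)

lemma D_sort1_by_positions:
  fixes n :: nat and t p :: "nat \<Rightarrow> real"
  defines "L \<equiv> sort1_schedule n t p"
  assumes "a < length L" "L ! a = Test j" and "b < length L" "L ! b = Proc j"
    and "c < length L" "L ! c = Test k" and "e < length L" "L ! e = Proc k"
  shows "D_sort1 n t p j k = (if a < e then t j else 0) + (if b < e then p j else 0)
     + (if c < b then t k else 0) + (if e < b then p k else 0)"
proof -
  have "distinct L" using sort1_schedule_permutes L_def by auto
  note in_prefix = distinct_nth_in_set_take_iff[OF this]
  show ?thesis
    unfolding D_sort1_def
    using d_time_eq_prefix[of n t p e k j] d_time_eq_prefix[of n t p b j k] \<open>distinct L\<close> assms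
      in_prefix[of a e] in_prefix[of b e] in_prefix[of c b] in_prefix[of e b]
    by simp
qed

lemma D_sort1_le_if_Test_first:
  fixes n :: nat and t p :: "nat \<Rightarrow> real"
  defines "L \<equiv> sort1_schedule n t p"
  assumes nonneg: "\<forall>i<n. t i \<ge> 0 \<and> p i \<ge> 0" and "j < n" "k < n" "j \<noteq> k"
    and a: "a < length L" "L ! a = Test j" and b: "b < length L" "L ! b = Proc j"
    and c: "c < length L" "L ! c = Test k" and e: "e < length L" "L ! e = Proc k"
    and "a < c"
  shows "D_sort1 n t p j k \<le> 2 * min (t j + p j) (t k + p k)"
proof -
  have "distinct L" using sort1_schedule_permutes L_def by auto
  note in_prefix = distinct_nth_in_set_take_iff[OF this]
  note greedy = sort1_schedule_nth_le_available[of _ n t p, folded L_def]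
  note Test_first = sort1_schedule_Test_before_Proc[of _ n t p, folded L_def]
  have "a < b" using Test_first[OF b] a in_prefix[of a b] by auto
  have "c < e" using Test_first[OF e] c in_prefix[of c e] by auto
  have "b \<noteq> c" "b \<noteq> e" using b c e \<open>j \<noteq> k\<close> by auto
  have "t j \<le> t k"
    using greedy[of a "Test k"] a c \<open>a < c\<close> in_prefix[of c a] \<open>k < n\<close> by auto
  have Proc_j_first: "p j \<le> t k" if "b < c"
    using greedy[of b "Test k"] b c in_prefix[of c b] \<open>k < n\<close> that by auto
  have Test_k_first: "t k \<le> p j" if "c < b"
    using greedy[of c "Proc j"] b c in_prefix[of b c] in_prefix[of a c] a \<open>a < c\<close> that by auto
  have Proc_j_before_Proc_k: "p j \<le> p k" if "c < b" "b < e"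
    using greedy[of b "Proc k"] b e in_prefix[of e b] in_prefix[of c b] c that by auto
  have Proc_k_first: "p k \<le> p j" if "e < b"
    using greedy[of e "Proc j"] b e in_prefix[of b e] in_prefix[of a e] a \<open>a < c\<close> \<open>c < e\<close> that
    by auto
  have "t j \<ge> 0" "p j \<ge> 0" "t k \<ge> 0" "p k \<ge> 0" using nonneg \<open>j < n\<close> \<open>k < n\<close> by auto
  note D = D_sort1_by_positions[OF a[unfolded L_def] b[unfolded L_def]
      c[unfolded L_def] e[unfolded L_def]]
  consider "b < c" | "c < b" "b < e" | "e < b" using \<open>b \<noteq> c\<close> \<open>b \<noteq> e\<close> \<open>c < e\<close> by linarith
  then show ?thesis
  proof cases
    case 1
    then have "D_sort1 n t p j k = t j + p j" using D \<open>a < c\<close> \<open>c < e\<close> by simp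
    with 1 show ?thesis using \<open>t j \<le> t k\<close> Proc_j_first \<open>0 \<le> t j\<close> \<open>0 \<le> p j\<close> \<open>0 \<le> p k\<close>
      by (simp add: min_def)
  next
    case 2
    then have "D_sort1 n t p j k = t j + p j + t k" using D \<open>a < c\<close> \<open>c < e\<close> by simp
    with 2 show ?thesis
      using \<open>t j \<le> t k\<close> Test_k_first Proc_j_before_Proc_k \<open>0 \<le> t j\<close> \<open>0 \<le> p j\<close>
      by (simp add: min_def)
  next
    case 3
    then have "D_sort1 n t p j k = t j + t k + p k" using D \<open>a < c\<close> \<open>c < e\<close> by simp
    with 3 show ?thesis
      using \<open>t j \<le> t k\<close> Test_k_first Proc_k_first \<open>c < e\<close> \<open>0 \<le> t j\<close> \<open>0 \<le> p k\<close>
      by (simp add: min_def)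
  qed
qed

lemma sort1_schedule_position:
  assumes "j < n"
  obtains a b where "a < length (sort1_schedule n t p)" "sort1_schedule n t p ! a = Test j"
    and "b < length (sort1_schedule n t p)" "sort1_schedule n t p ! b = Proc j"
  using assms sort1_schedule_permutes[of n t p] by (metis UnI1 UnI2 image_eqI in_set_conv_nth lessThan_iff)

theorem mainTheorem5:
  fixes n :: nat and t p :: "nat \<Rightarrow> real" and j k :: nat
  assumes "\<forall>i<n. t i \<ge> 0 \<and> p i \<ge> 0"
    and "general_position n t p"
    and "j < n" and "k < n" and "j \<noteq> k"
  shows "D_sort1 n t p j k \<le> 2 * min (t j + p j) (t k + p k)"
proof -
  obtain a b where a: "a < length (sort1_schedule n t p)" "sort1_schedule n t p ! a = Test j"
    and b: "b < length (sort1_schedule n t p)" "sort1_schedule n t p ! b = Proc j"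
    using sort1_schedule_position[OF \<open>j < n\<close>] .
  obtain c e where c: "c < length (sort1_schedule n t p)" "sort1_schedule n t p ! c = Test k"
    and e: "e < length (sort1_schedule n t p)" "sort1_schedule n t p ! e = Proc k"
    using sort1_schedule_position[OF \<open>k < n\<close>] .
  have "a \<noteq> c" using a c \<open>j \<noteq> k\<close> by auto
  then consider "a < c" | "c < a" by linarith
  then show ?thesis
  proof cases
    case 1
    then show ?thesis using D_sort1_le_if_Test_first[OF assms(1,3-5) a b c e] by simp
  next
    case 2
    then show ?thesis
      using D_sort1_le_if_Test_first[OF assms(1,4,3) \<open>j \<noteq> k\<close>[symmetric] c e a b]
      by (simp add: D_sort1_commute min.commute)
  qed
qed

end
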